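(* Let $\mathcal{U}$ be a uniformity on a set $G$ generating the topology $\tau_{\mathcal{U}}$, and assume the topological space $(G,\tau_{\mathcal{U}})$ has the Hurewicz property. Then $(G,\tau_{\mathcal{U}})$ satisfies ${\sf S}_c(\mathcal{O}_{\mathcal{U}},\mathcal{O})$ if and only if it satisfies ${\sf S}_c(\mathcal{O},\mathcal{O})$.
   Context: For $V\subseteq G\times G$ and $x\in G$, $V(x)=\{y\in G:(x,y)\in V\}$. $\mathcal{O}_{\mathcal{U}}=\{\{V(x):x\in G\}: V\in\mathcal{U}\}$ is the collection of uniform covers (with respect to $\mathcal{U}$). $\mathcal{O}$ is the collection of all open covers of $(G,\tau_{\mathcal{U}})$. A family $\mathcal{B}$ refines $\mathcal{A}$ if every member of $\mathcal{B}$ is contained in some member of $\mathcal{A}$. ${\sf S}_c(\mathcal{A},\mathcal{B})$: for each sequence $(A_n:n<\infty)$ of elements of $\mathcal{A}$ there is a sequence $(B_n:n<\infty)$ such that each $B_n$ is a pairwise disjoint family of open sets refining $A_n$ and $\bigcup_nB_n\in\mathcal{B}$. A space $X$ has the Hurewicz property if for each sequence $(\mathcal{U}_n:n<\infty)$ of open covers of $X$ there are finite $\mathcal{F}_n\subseteq\mathcal{U}_n$ such that for each $x\in X$ the set $\{n:x\notin\bigcup\mathcal{F}_n\}$ is finite. *)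

theory Defs
  imports "HOL-Analysis.Analysis"
begin

definition uniformity_on :: "'a set \<Rightarrow> ('a \<times> 'a) set set \<Rightarrow> bool" where
  "uniformity_on G U \<longleftrightarrow>
     U \<noteq> {} \<and>
     (\<forall>V\<in>U. V \<subseteq> G \<times> G \<and> Id_on G \<subseteq> V) \<and>
     (\<forall>V W. V \<in> U \<and> V \<subseteq> W \<and> W \<subseteq> G \<times> G \<longrightarrow> W \<in> U) \<and>
     (\<forall>V\<in>U. \<forall>W\<in>U. V \<inter> W \<in> U) \<and>
     (\<forall>V\<in>U. V\<inverse> \<in> U) \<and>
     (\<forall>V\<in>U. \<exists>W\<in>U. W O W \<subseteq> V)"

definition utop :: "'a set \<Rightarrow> ('a \<times> 'a) set set \<Rightarrow> 'a topology" where
  "utop G U = topology (\<lambda>S. S \<subseteq> G \<and> (\<forall>x\<in>S. \<exists>V\<in>U. V `` {x} \<subseteq> S))"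

definition uniform_covers :: "'a set \<Rightarrow> ('a \<times> 'a) set set \<Rightarrow> 'a set set set" where
  "uniform_covers G U = {(\<lambda>x. V `` {x}) ` G | V. V \<in> U}"

definition open_covers :: "'a topology \<Rightarrow> 'a set set set" where
  "open_covers X = {C. (\<forall>c\<in>C. openin X c) \<and> \<Union>C = topspace X}"

definition refines :: "'a set set \<Rightarrow> 'a set set \<Rightarrow> bool" where
  "refines B A \<longleftrightarrow> (\<forall>b\<in>B. \<exists>a\<in>A. b \<subseteq> a)"

definition S_c :: "'a topology \<Rightarrow> 'a set set set \<Rightarrow> 'a set set set \<Rightarrow> bool" where
  "S_c X \<A> \<B> \<longleftrightarrow>
     (\<forall>A. (\<forall>n::nat. A n \<in> \<A>) \<longrightarrow>
        (\<exists>B. (\<forall>n. disjoint (B n) \<and> (\<forall>b\<in>B n. openin X b) \<and> refines (B n) (A n))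
             \<and> (\<Union>n. B n) \<in> \<B>))"

definition hurewicz :: "'a topology \<Rightarrow> bool" where
  "hurewicz X \<longleftrightarrow>
     (\<forall>\<U>. (\<forall>n::nat. \<U> n \<in> open_covers X) \<longrightarrow>
        (\<exists>F. (\<forall>n. finite (F n) \<and> F n \<subseteq> \<U> n) \<and>
             (\<forall>x\<in>topspace X. finite {n. x \<notin> \<Union>(F n)})))"

end

theory Submission
  imports Defs "HOL-Library.Nat_Bijection"
begin

(* Write int V(x) for the interior of the entourage neighbourhood V(x).
   (<=) Every uniform cover {V(x)} is refined by the open cover {int V(x)}, and S_c is
   monotone under this kind of refinement, so S_c(O,O) implies S_c(O_U,O).
   (=>) Given open covers A_n, choose for every x an entourage V_{n,x} with
   (V o V^-1 o V)(x) inside some member of A_n.  Hurewicz, applied to the open covers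
   {int V_{n,x}(x) : x}, yields finite sets P_n of centres such that every point lies in
   int V_{n,p}(p) for some p in P_n, for all but finitely many n.  The entourage W_n, the
   intersection of the V_{n,p} with p in P_n, gives a uniform cover; running S_c(O_U,O)
   along infinitely many disjoint subsequences gives disjoint open families D_n refining
   {W_n(y)} such that every point is covered by D_n for infinitely many n.  For such an n
   with x in int V_{n,p}(p), the member of D_n around x lies in (V o V^-1 o V)(p) for
   V = V_{n,p}, hence in a member of A_n; so the members of D_n refining A_n still cover. *)

section \<open>Elementary facts about uniformities\<close>

lemma uniformityD:
  assumes "uniformity_on G U"
  shows "U \<noteq> {}"
    and "\<And>V. V \<in> U \<Longrightarrow> V \<subseteq> G \<times> G \<and> Id_on G \<subseteq> V"
    and "\<And>V W. V \<in> U \<Longrightarrow> V \<subseteq> W \<Longrightarrow> W \<subseteq> G \<times> G \<Longrightarrow> W \<in> U"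
    and "\<And>V W. V \<in> U \<Longrightarrow> W \<in> U \<Longrightarrow> V \<inter> W \<in> U"
    and "\<And>V. V \<in> U \<Longrightarrow> V\<inverse> \<in> U"
    and "\<And>V. V \<in> U \<Longrightarrow> \<exists>W\<in>U. W O W \<subseteq> V"
  using assms unfolding uniformity_on_def by meson+

lemma uniformity_subset: "uniformity_on G U \<Longrightarrow> V \<in> U \<Longrightarrow> V \<subseteq> G \<times> G"
  using uniformityD(2) by blast

lemma uniformity_refl: "uniformity_on G U \<Longrightarrow> V \<in> U \<Longrightarrow> x \<in> G \<Longrightarrow> (x, x) \<in> V"
  using uniformityD(2) by blast

lemmas uniformity_Int = uniformityD(4)
  and uniformity_converse = uniformityD(5)
  and uniformity_half = uniformityD(6)

lemma uniformity_full:
  assumes u: "uniformity_on G U"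
  shows "G \<times> G \<in> U"
proof -
  obtain V where "V \<in> U" using uniformityD(1)[OF u] by blast
  then show ?thesis using uniformityD(3)[OF u] uniformity_subset[OF u] by blast
qed

lemma uniformity_finite_Inter:
  assumes u: "uniformity_on G U" and "finite P" and "\<forall>p\<in>P. f p \<in> U"
  shows "(G \<times> G) \<inter> \<Inter>(f ` P) \<in> U"
  using assms(2,3)
proof (induction P rule: finite_induct)
  case empty
  then show ?case using uniformity_full[OF u] by simp
next
  case (insert p P)
  then have "f p \<inter> ((G \<times> G) \<inter> \<Inter>(f ` P)) \<in> U"
    using uniformity_Int[OF u] by simp
  moreover have "f p \<inter> ((G \<times> G) \<inter> \<Inter>(f ` P)) = (G \<times> G) \<inter> \<Inter>(f ` insert p P)"
    by auto
  ultimately show ?case by simp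
qed

text \<open>Every entourage E contains V o V^-1 o V for some entourage V: take a symmetric
  V with V o V contained in a T with T o T contained in E.\<close>
lemma uniformity_triple:
  assumes u: "uniformity_on G U" and E: "E \<in> U"
  shows "\<exists>V\<in>U. V O V\<inverse> O V \<subseteq> E"
proof -
  obtain T where T: "T \<in> U" "T O T \<subseteq> E" using uniformity_half[OF u E] by blast
  obtain S where S: "S \<in> U" "S O S \<subseteq> T" using uniformity_half[OF u T(1)] by blast
  define R where "R = (S \<inter> T) \<inter> (S \<inter> T)\<inverse>"
  have R: "R \<in> U"
    unfolding R_def using uniformity_Int[OF u] uniformity_converse[OF u] S(1) T(1) by blast
  have "R\<inverse> O R \<subseteq> S O S" unfolding R_def by (intro relcomp_mono) auto
  then have "R O R\<inverse> O R \<subseteq> T O T" using S(2) unfolding R_def by (intro relcomp_mono) auto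
  with T(2) R show ?thesis by blast
qed

section \<open>The uniform topology\<close>

lemma istopology_utop:
  assumes u: "uniformity_on G U"
  shows "istopology (\<lambda>S. S \<subseteq> G \<and> (\<forall>x\<in>S. \<exists>V\<in>U. V `` {x} \<subseteq> S))"
  unfolding istopology_def
proof (rule conjI; intro allI impI)
  fix S T
  assume S: "S \<subseteq> G \<and> (\<forall>x\<in>S. \<exists>V\<in>U. V `` {x} \<subseteq> S)"
    and T: "T \<subseteq> G \<and> (\<forall>x\<in>T. \<exists>V\<in>U. V `` {x} \<subseteq> T)"
  have "\<exists>V\<in>U. V `` {x} \<subseteq> S \<inter> T" if x: "x \<in> S \<inter> T" for x
  proof -
    obtain V where V: "V \<in> U" "V `` {x} \<subseteq> S" using S x by (meson IntD1)
    obtain W where W: "W \<in> U" "W `` {x} \<subseteq> T" using T x by (meson IntD2)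
    show ?thesis
      using uniformity_Int[OF u V(1) W(1)] V(2) W(2) by (intro bexI[of _ "V \<inter> W"]) auto
  qed
  with S show "S \<inter> T \<subseteq> G \<and> (\<forall>x\<in>S \<inter> T. \<exists>V\<in>U. V `` {x} \<subseteq> S \<inter> T)"
    by (simp add: le_infI1)
next
  fix K
  assume K: "\<forall>S\<in>K. S \<subseteq> G \<and> (\<forall>x\<in>S. \<exists>V\<in>U. V `` {x} \<subseteq> S)"
  show "\<Union>K \<subseteq> G \<and> (\<forall>x\<in>\<Union>K. \<exists>V\<in>U. V `` {x} \<subseteq> \<Union>K)"
  proof (intro conjI ballI)
    show "\<Union>K \<subseteq> G" using K by (simp add: Union_least)
    fix x assume "x \<in> \<Union>K"
    then obtain S where S: "S \<in> K" "x \<in> S" by (rule UnionE)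
    then obtain V where "V \<in> U" "V `` {x} \<subseteq> S" using K by meson
    with S(1) show "\<exists>V\<in>U. V `` {x} \<subseteq> \<Union>K" by (meson Union_upper order_trans)
  qed
qed

lemma openin_utop:
  assumes u: "uniformity_on G U"
  shows "openin (utop G U) S \<longleftrightarrow> S \<subseteq> G \<and> (\<forall>x\<in>S. \<exists>V\<in>U. V `` {x} \<subseteq> S)"
  using istopology_utop[OF u] unfolding utop_def by simp

lemma topspace_utop:
  assumes u: "uniformity_on G U"
  shows "topspace (utop G U) = G"
proof -
  have "openin (utop G U) G"
    unfolding openin_utop[OF u] using uniformity_full[OF u] by (intro conjI ballI bexI) auto
  then show ?thesis unfolding topspace_def openin_utop[OF u] by auto
qed

lemma open_covers_utop:
  "uniformity_on G U \<Longrightarrow>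
     C \<in> open_covers (utop G U) \<longleftrightarrow> (\<forall>c\<in>C. openin (utop G U) c) \<and> \<Union>C = G"
  unfolding open_covers_def by (simp add: topspace_utop)

section \<open>Interiors of entourage neighbourhoods\<close>

text \<open>The interior of V(x) in the uniform topology.  Uniform covers are not open covers
  in general; replacing each V(x) by its interior produces an open cover refining it.\<close>
definition entourage_interior ::
    "'a set \<Rightarrow> ('a \<times> 'a) set set \<Rightarrow> ('a \<times> 'a) set \<Rightarrow> 'a \<Rightarrow> 'a set" where
  "entourage_interior G U V x = {z \<in> G. \<exists>W\<in>U. W `` {z} \<subseteq> V `` {x}}"

lemma entourage_interior_iff:
  "z \<in> entourage_interior G U V x \<longleftrightarrow> z \<in> G \<and> (\<exists>W\<in>U. W `` {z} \<subseteq> V `` {x})"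
  unfolding entourage_interior_def by (rule mem_Collect_eq)

lemma entourage_interior_open:
  assumes u: "uniformity_on G U"
  shows "openin (utop G U) (entourage_interior G U V x)"
  unfolding openin_utop[OF u]
proof (intro conjI ballI)
  show "entourage_interior G U V x \<subseteq> G" using entourage_interior_iff by fast
next
  fix z assume "z \<in> entourage_interior G U V x"
  then obtain W where W: "W \<in> U" "W `` {z} \<subseteq> V `` {x}"
    unfolding entourage_interior_iff by (elim conjE bexE)
  obtain W' where W': "W' \<in> U" "W' O W' \<subseteq> W" using uniformity_half[OF u W(1)] by (elim bexE)
  text \<open>Each w in W'(z) has W'(w) inside W(z), hence inside V(x), so it is an interior point.\<close>
  have "w \<in> entourage_interior G U V x" if w: "w \<in> W' `` {z}" for w
  proof -
    have "W' `` {w} \<subseteq> V `` {x}" using w W'(2) W(2) by blast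
    moreover have "w \<in> G" using w uniformity_subset[OF u W'(1)] by blast
    ultimately show ?thesis unfolding entourage_interior_iff using W'(1) by (intro conjI bexI)
  qed
  with W'(1) show "\<exists>E\<in>U. E `` {z} \<subseteq> entourage_interior G U V x" by (intro bexI subsetI)
qed

lemma entourage_interior_centre:
  assumes "V \<in> U" and "x \<in> G"
  shows "x \<in> entourage_interior G U V x"
  unfolding entourage_interior_iff using assms by (intro conjI bexI[of _ V]) auto

lemma entourage_interior_subset:
  assumes u: "uniformity_on G U"
  shows "entourage_interior G U V x \<subseteq> V `` {x}"
proof
  fix z assume "z \<in> entourage_interior G U V x"
  then obtain W where "z \<in> G" "W \<in> U" "W `` {z} \<subseteq> V `` {x}"
    unfolding entourage_interior_iff by (elim conjE bexE)
  moreover have "(z, z) \<in> W" using uniformity_refl[OF u] calculation by simp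
  ultimately show "z \<in> V `` {x}" by blast
qed

lemma entourage_interior_cover:
  assumes u: "uniformity_on G U" and f: "\<And>x. x \<in> G \<Longrightarrow> f x \<in> U"
  shows "(\<lambda>x. entourage_interior G U (f x) x) ` G \<in> open_covers (utop G U)"
  unfolding open_covers_utop[OF u]
proof
  show "\<forall>c\<in>(\<lambda>x. entourage_interior G U (f x) x) ` G. openin (utop G U) c"
    using entourage_interior_open[OF u] by blast
  have "entourage_interior G U (f x) x \<subseteq> G" for x
    using entourage_interior_iff by fast
  moreover have "x \<in> entourage_interior G U (f x) x" if "x \<in> G" for x
    using entourage_interior_centre[OF f[OF that] that] .
  ultimately show "\<Union>((\<lambda>x. entourage_interior G U (f x) x) ` G) = G" by blast
qed

section \<open>General facts about S_c\<close>

definition disjoint_open_refinement :: "'a topology \<Rightarrow> 'a set set \<Rightarrow> 'a set set \<Rightarrow> bool" where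
  "disjoint_open_refinement X B A \<longleftrightarrow> disjoint B \<and> (\<forall>b\<in>B. openin X b) \<and> refines B A"

lemma S_c_iff:
  "S_c X \<A> \<B> \<longleftrightarrow>
     (\<forall>A. (\<forall>n::nat. A n \<in> \<A>) \<longrightarrow>
        (\<exists>B. (\<forall>n. disjoint_open_refinement X (B n) (A n)) \<and> (\<Union>n. B n) \<in> \<B>))"
  unfolding S_c_def disjoint_open_refinement_def ..

lemma refines_trans: "refines C B \<Longrightarrow> refines B A \<Longrightarrow> refines C A"
  unfolding refines_def by (meson order_trans)

lemma disjoint_open_refinement_trans:
  "disjoint_open_refinement X B A' \<Longrightarrow> refines A' A \<Longrightarrow> disjoint_open_refinement X B A"
  unfolding disjoint_open_refinement_def by (meson refines_trans)

lemma disjoint_open_refinement_subfamily: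
  assumes "disjoint_open_refinement X D A'" "B \<subseteq> D" "refines B A"
  shows "disjoint_open_refinement X B A"
  using assms pairwise_subset[of disjnt D B] unfolding disjoint_open_refinement_def disjoint_def
  by (meson subsetD)

lemma S_c_refine_mono:
  assumes S: "S_c X \<A>' \<B>" and ref: "\<And>A. A \<in> \<A> \<Longrightarrow> \<exists>A'\<in>\<A>'. refines A' A"
  shows "S_c X \<A> \<B>"
  unfolding S_c_iff
proof (intro allI impI)
  fix A assume "\<forall>n::nat. A n \<in> \<A>"
  then have "\<forall>n. \<exists>A'. A' \<in> \<A>' \<and> refines A' (A n)" using ref by meson
  then obtain A' where A': "\<And>n. A' n \<in> \<A>'" "\<And>n. refines (A' n) (A n)"
    by metis
  then obtain B where B: "\<And>n. disjoint_open_refinement X (B n) (A' n)" "(\<Union>n. B n) \<in> \<B>"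
    using S unfolding S_c_iff by metis
  have "disjoint_open_refinement X (B n) (A n)" for n
    using B(1) A'(2) by (rule disjoint_open_refinement_trans)
  with B(2) show "\<exists>B. (\<forall>n. disjoint_open_refinement X (B n) (A n)) \<and> (\<Union>n. B n) \<in> \<B>"
    by (intro exI[of _ B]) simp
qed

lemma infinite_meets_cofinite:
  fixes S :: "nat set"
  assumes "infinite S" and "finite {n. \<not> Q n}"
  obtains n where "n \<in> S" "Q n"
proof -
  have "infinite (S - {n. \<not> Q n})" using assms by (rule Diff_infinite_finite[rotated])
  then have "S - {n. \<not> Q n} \<noteq> {}" by (rule infinite_imp_nonempty)
  then show thesis using that by blast
qed

text \<open>If S_c(\<A>,O) holds, the selected families can be chosen so that every point is
  covered infinitely often: apply S_c separately along the disjoint subsequences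
  k \<mapsto> prod_encode (j, k), one for every j.\<close>
lemma S_c_infinitely_often:
  fixes A :: "nat \<Rightarrow> 'a set set"
  assumes S: "S_c X \<A> (open_covers X)" and A: "\<And>n. A n \<in> \<A>"
  obtains D where "\<And>n. disjoint_open_refinement X (D n) (A n)"
    "\<And>x. x \<in> topspace X \<Longrightarrow> infinite {n. x \<in> \<Union>(D n)}"
proof -
  have "\<forall>j. \<exists>B. (\<forall>k. disjoint_open_refinement X (B k) (A (prod_encode (j, k))))
          \<and> (\<Union>k. B k) \<in> open_covers X"
    using S A unfolding S_c_iff by simp
  then obtain B where B: "\<And>j k. disjoint_open_refinement X (B j k) (A (prod_encode (j, k)))"
    "\<And>j. (\<Union>k. B j k) \<in> open_covers X"
    by metis
  define D where "D n = B (fst (prod_decode n)) (snd (prod_decode n))" for n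
  have D_encode: "D (prod_encode (j, k)) = B j k" for j k unfolding D_def by simp
  have "infinite {n. x \<in> \<Union>(D n)}" if x: "x \<in> topspace X" for x
  proof -
    have "\<forall>j. \<exists>k. x \<in> \<Union>(B j k)" using B(2) x unfolding open_covers_def by blast
    then obtain k where k: "\<And>j. x \<in> \<Union>(B j (k j))" by metis
    have "inj (\<lambda>j. prod_encode (j, k j))"
      by (rule injI) (metis prod_encode_eq prod.inject)
    then have "infinite (range (\<lambda>j. prod_encode (j, k j)))"
      using finite_imageD by blast
    moreover have "range (\<lambda>j. prod_encode (j, k j)) \<subseteq> {n. x \<in> \<Union>(D n)}"
      using k D_encode by auto
    ultimately show ?thesis using finite_subset by blast
  qed
  moreover have "disjoint_open_refinement X (D n) (A n)" for n
    using B(1)[of "fst (prod_decode n)" "snd (prod_decode n)"] unfolding D_def by simp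
  ultimately show thesis by (rule that[rotated])
qed

lemma refining_members_cover:
  assumes D: "\<And>n. disjoint_open_refinement X (D n) (C n)"
    and cover: "\<And>x. x \<in> topspace X \<Longrightarrow> \<exists>n. \<exists>b\<in>D n. x \<in> b \<and> (\<exists>a\<in>A n. b \<subseteq> a)"
  shows "\<exists>B. (\<forall>n. disjoint_open_refinement X (B n) (A n)) \<and> (\<Union>n. B n) \<in> open_covers X"
proof -
  define B where "B n = {b \<in> D n. \<exists>a\<in>A n. b \<subseteq> a}" for n
  have B: "disjoint_open_refinement X (B n) (A n)" for n
  proof (rule disjoint_open_refinement_subfamily[OF D])
    show "B n \<subseteq> D n" "refines (B n) (A n)" unfolding B_def refines_def by auto
  qed
  have B_open: "openin X b" if "b \<in> (\<Union>n. B n)" for b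
  proof -
    from that obtain n where "b \<in> B n" by (rule UN_E)
    then show ?thesis using B[of n] unfolding disjoint_open_refinement_def by simp
  qed
  then have "\<Union>(\<Union>n. B n) \<subseteq> topspace X" by (intro Union_least openin_subset)
  moreover have "topspace X \<subseteq> \<Union>(\<Union>n. B n)"
  proof
    fix x assume "x \<in> topspace X"
    from cover[OF this] obtain n where "\<exists>b\<in>D n. x \<in> b \<and> (\<exists>a\<in>A n. b \<subseteq> a)" by (rule exE)
    then obtain b where b: "b \<in> D n" "x \<in> b \<and> (\<exists>a\<in>A n. b \<subseteq> a)" by (rule bexE)
    then have "b \<in> B n" unfolding B_def by simp
    with b(2) show "x \<in> \<Union>(\<Union>n. B n)" by blast
  qed
  ultimately have "(\<Union>n. B n) \<in> open_covers X"
    using B_open unfolding open_covers_def by (intro CollectI conjI ballI equalityI)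
  with B show ?thesis by (intro exI[of _ B] conjI allI)
qed

lemma uniform_cover_refined_by_open_cover:
  assumes u: "uniformity_on G U" and A: "A \<in> uniform_covers G U"
  shows "\<exists>C\<in>open_covers (utop G U). refines C A"
proof -
  obtain V where V: "V \<in> U" "A = (\<lambda>x. V `` {x}) ` G"
    using A unfolding uniform_covers_def by auto
  have "refines ((\<lambda>x. entourage_interior G U V x) ` G) A"
    unfolding refines_def
  proof
    fix c assume "c \<in> (\<lambda>x. entourage_interior G U V x) ` G"
    then obtain x where "x \<in> G" "c = entourage_interior G U V x" by (rule imageE)
    then show "\<exists>a\<in>A. c \<subseteq> a"
      using V(2) entourage_interior_subset[OF u] by (intro bexI[of _ "V `` {x}"]) auto
  qed
  with entourage_interior_cover[OF u V(1)] show ?thesis by (rule bexI[rotated])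
qed

lemma open_cover_triple_entourage:
  assumes u: "uniformity_on G U" and A: "A \<in> open_covers (utop G U)" and x: "x \<in> G"
  shows "\<exists>V a. V \<in> U \<and> a \<in> A \<and> (V O V\<inverse> O V) `` {x} \<subseteq> a"
proof -
  have "x \<in> \<Union>A" using A x unfolding open_covers_utop[OF u] by simp
  then obtain a where a: "a \<in> A" "x \<in> a" by (rule UnionE)
  then have "openin (utop G U) a" using A unfolding open_covers_utop[OF u] by simp
  then obtain E where E: "E \<in> U" "E `` {x} \<subseteq> a"
    using a(2) unfolding openin_utop[OF u] by (meson bexE)
  obtain V where V: "V \<in> U" "V O V\<inverse> O V \<subseteq> E"
    using uniformity_triple[OF u E(1)] by (elim bexE)
  have "(V O V\<inverse> O V) `` {x} \<subseteq> a" using V(2) E(2) by blast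
  with V(1) a(1) show ?thesis by meson
qed

lemma hurewicz_finite_centres:
  fixes f :: "nat \<Rightarrow> 'a \<Rightarrow> ('a \<times> 'a) set"
  assumes u: "uniformity_on G U" and H: "hurewicz (utop G U)"
    and f: "\<forall>n. \<forall>x\<in>G. f n x \<in> U"
  obtains P where "\<And>n. finite (P n)" "\<And>n. P n \<subseteq> G"
    "\<And>x. x \<in> G \<Longrightarrow> finite {n. x \<notin> (\<Union>p\<in>P n. entourage_interior G U (f n p) p)}"
proof -
  let ?C = "\<lambda>n. (\<lambda>x. entourage_interior G U (f n x) x) ` G"
  have C: "?C n \<in> open_covers (utop G U)" for n
    by (rule entourage_interior_cover[OF u]) (use f in blast)
  obtain F where F: "\<forall>n. finite (F n) \<and> F n \<subseteq> ?C n" "\<forall>x\<in>G. finite {n. x \<notin> \<Union>(F n)}"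
    using H[unfolded hurewicz_def, rule_format, of ?C, OF C]
    unfolding topspace_utop[OF u] by (elim exE conjE)
  have "\<forall>n. \<exists>P. P \<subseteq> G \<and> finite P \<and> F n = (\<lambda>x. entourage_interior G U (f n x) x) ` P"
    using F(1) finite_subset_image by meson
  then obtain P where P: "\<And>n. P n \<subseteq> G" "\<And>n. finite (P n)"
    "\<And>n. F n = (\<lambda>x. entourage_interior G U (f n x) x) ` P n"
    by metis
  show thesis
  proof (rule that[of P])
    fix x assume "x \<in> G"
    then show "finite {n. x \<notin> (\<Union>p\<in>P n. entourage_interior G U (f n p) p)}"
      using F(2) by (simp add: P(3))
  qed (use P in auto)
qed

lemma refinement_member_in_triple:
  assumes D: "refines D ((\<lambda>y. W `` {y}) ` G)" and b: "b \<in> D" "x \<in> b"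
    and px: "(p, x) \<in> V" and WV: "W \<subseteq> V"
  shows "b \<subseteq> (V O V\<inverse> O V) `` {p}"
proof -
  have "\<exists>c\<in>(\<lambda>y. W `` {y}) ` G. b \<subseteq> c" using D b(1) unfolding refines_def by (rule bspec)
  then obtain c where c: "c \<in> (\<lambda>y. W `` {y}) ` G" "b \<subseteq> c" by (rule bexE)
  from c(1) obtain y where "c = W `` {y}" by (rule imageE)
  with c(2) have "b \<subseteq> W `` {y}" by simp
  with b(2) px WV show ?thesis by blast
qed

lemma S_c_open_from_uniform:
  assumes u: "uniformity_on G U" and H: "hurewicz (utop G U)"
    and SU: "S_c (utop G U) (uniform_covers G U) (open_covers (utop G U))"
  shows "S_c (utop G U) (open_covers (utop G U)) (open_covers (utop G U))"
  unfolding S_c_iff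
proof (intro allI impI)
  fix A assume A: "\<forall>n::nat. A n \<in> open_covers (utop G U)"
  have "\<forall>n x. \<exists>V a. x \<in> G \<longrightarrow> V \<in> U \<and> a \<in> A n \<and> (V O V\<inverse> O V) `` {x} \<subseteq> a"
    using open_cover_triple_entourage[OF u] A by blast
  then obtain V a where Va: "\<And>n x. x \<in> G \<Longrightarrow> V n x \<in> U"
    "\<And>n x. x \<in> G \<Longrightarrow> a n x \<in> A n"
    "\<And>n x. x \<in> G \<Longrightarrow> (V n x O (V n x)\<inverse> O V n x) `` {x} \<subseteq> a n x"
    by metis
  have VU: "\<forall>n. \<forall>x\<in>G. V n x \<in> U" using Va(1) by blast
  obtain P where P: "\<And>n. finite (P n)" "\<And>n. P n \<subseteq> G"
    "\<And>x. x \<in> G \<Longrightarrow> finite {n. x \<notin> (\<Union>p\<in>P n. entourage_interior G U (V n p) p)}"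
    using hurewicz_finite_centres[OF u H VU] by blast
  define W where "W n = (G \<times> G) \<inter> \<Inter>(V n ` P n)" for n
  have "W n \<in> U" for n
    unfolding W_def using P(1,2) Va(1) by (intro uniformity_finite_Inter[OF u]) blast+
  then have UC: "(\<lambda>x. W n `` {x}) ` G \<in> uniform_covers G U" for n
    unfolding uniform_covers_def mem_Collect_eq by (intro exI[of _ "W n"] conjI refl)
  obtain D where D: "\<And>n. disjoint_open_refinement (utop G U) (D n) ((\<lambda>x. W n `` {x}) ` G)"
    "\<And>x. x \<in> topspace (utop G U) \<Longrightarrow> infinite {n. x \<in> \<Union>(D n)}"
    by (rule S_c_infinitely_often[OF SU UC]) (rule that)
  text \<open>A point covered by D n and near a centre p of P n lies in a member of D n
    refining A n.  By the choice of P and D, every point admits such an n.\<close>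
  have "\<exists>n. \<exists>b\<in>D n. x \<in> b \<and> (\<exists>a\<in>A n. b \<subseteq> a)" if x: "x \<in> topspace (utop G U)" for x
  proof -
    have xG: "x \<in> G" using x topspace_utop[OF u] by simp
    obtain n where "n \<in> {n. x \<in> \<Union>(D n)}"
      and "x \<in> (\<Union>p\<in>P n. entourage_interior G U (V n p) p)"
      by (rule infinite_meets_cofinite[OF D(2)[OF x] P(3)[OF xG]]) (rule that)
    then have n: "x \<in> \<Union>(D n)" "x \<in> (\<Union>p\<in>P n. entourage_interior G U (V n p) p)"
      by simp_all
    from n(2) obtain p where p: "p \<in> P n" "x \<in> entourage_interior G U (V n p) p"
      by (rule UN_E)
    have pG: "p \<in> G" using P(2) p(1) by (rule subsetD)
    obtain b where b: "b \<in> D n" "x \<in> b" using n(1) by (rule UnionE)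
    have ref: "refines (D n) ((\<lambda>x. W n `` {x}) ` G)"
      using D(1) unfolding disjoint_open_refinement_def by simp
    have px: "(p, x) \<in> V n p" using entourage_interior_subset[OF u] p(2) by blast
    have "W n \<subseteq> V n p" unfolding W_def using p(1) by (intro le_infI2 INT_lower)
    with ref b px have "b \<subseteq> (V n p O (V n p)\<inverse> O V n p) `` {p}"
      by (rule refinement_member_in_triple)
    then have "b \<subseteq> a n p" using Va(3)[OF pG] by (rule order_trans)
    with b Va(2)[OF pG] show ?thesis by blast
  qed
  then show "\<exists>B. (\<forall>n. disjoint_open_refinement (utop G U) (B n) (A n))
      \<and> (\<Union>n. B n) \<in> open_covers (utop G U)"
    by (rule refining_members_cover[OF D(1)])
qed

theorem theorem5p1:
  fixes G :: "'a set" and U :: "('a \<times> 'a) set set"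
  assumes "uniformity_on G U"
    and "hurewicz (utop G U)"
  shows "S_c (utop G U) (uniform_covers G U) (open_covers (utop G U))
     \<longleftrightarrow> S_c (utop G U) (open_covers (utop G U)) (open_covers (utop G U))"
proof
  assume "S_c (utop G U) (uniform_covers G U) (open_covers (utop G U))"
  then show "S_c (utop G U) (open_covers (utop G U)) (open_covers (utop G U))"
    using S_c_open_from_uniform assms by blast
next
  assume "S_c (utop G U) (open_covers (utop G U)) (open_covers (utop G U))"
  then show "S_c (utop G U) (uniform_covers G U) (open_covers (utop G U))"
    using S_c_refine_mono uniform_cover_refined_by_open_cover[OF assms(1)] by blast
qed

end
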